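(* Let $M\in K_{Cone}$ and let $\bar g=(g_0,\dots,g_{59})$ be a 60-tuple of automorphisms of $M$ with $\mathrm{Aut}(M)\models A_5(\bar g)$. Then there is at least one point of $M$ fixed by every $g_i$.
   Context: A cycle-free partial order (CFPO) is a partial order in the sense of Warren and Rubin (connected, with no cycles); for $s,t\in M$, $[\![s,t]\!]$ denotes the path from $s$ to $t$. For $x<y$, the upwards cone of $x$ containing $y$ is $\{t: x\notin[\![t,y]\!]\}$; for $z<x$ the downwards cone of $x$ containing $z$ is $\{t: x\notin[\![t,z]\!]\}$. $K_{Cone}$ is the class of path complete CFPOs $M$ that are 1-transitive (Aut$(M)$ is transitive on $M$), cone transitive (for each $x$, any two upwards cones of $x$, and any two downwards cones of $x$, are mapped onto each other by some automorphism), and such that $5\le ro\uparrow(M)\le ro\downarrow(M)$, where $ro\uparrow(M)$ (resp. $ro\downarrow(M)$) is the number of upwards (resp. downwards) cones of any point. Fix an enumeration $a_0,\dots,a_{59}$ of the alternating group $A_5$. For a 60-tuple $\bar f=(f_0,\dots,f_{59})$ of elements of $\mathrm{Aut}(M)$, $A_5(\bar f)$ is the conjunction of all formulas $f_if_j=f_k$ for which $a_ia_j=a_k$ and all formulas $f_if_j\ne f_k$ for which $a_ia_j\neq a_k$ (so $\bar f$ satisfies it iff $a_i\mapsto f_i$ is an injective homomorphism $A_5\to\mathrm{Aut}(M)$). *)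

theory Defs
  imports "HOL-Combinatorics.Permutations"
begin

text \<open>The CFPO M is the whole carrier type 'a with its order.\<close>

definition comparable :: "'a::order \<Rightarrow> 'a \<Rightarrow> bool" where
  "comparable x y \<longleftrightarrow> x \<le> y \<or> y \<le> x"

definition seg :: "'a::order \<Rightarrow> 'a \<Rightarrow> 'a set" where
  "seg x y = {z. (x \<le> z \<and> z \<le> y) \<or> (y \<le> z \<and> z \<le> x)}"

definition interval_connected :: "'a::order set \<Rightarrow> bool" where
  "interval_connected C \<longleftrightarrow>
     (\<forall>a\<in>C. \<forall>b\<in>C. \<exists>xs. xs \<noteq> [] \<and> hd xs = a \<and> last xs = b \<and>
        (\<forall>i. Suc i < length xs \<longrightarrow>
             comparable (xs ! i) (xs ! Suc i) \<and> seg (xs ! i) (xs ! Suc i) \<subseteq> C))"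

definition cfpo_path :: "'a::order \<Rightarrow> 'a \<Rightarrow> 'a set" where
  "cfpo_path s t = \<Inter>{C. s \<in> C \<and> t \<in> C \<and> interval_connected C}"

text \<open>Path complete CFPO: M is connected and every path [[s,t]] is itself a
  connected subset of M (this excludes cycles, and paths passing through
  points of the completion not in M).\<close>
definition path_complete_cfpo :: "'a::order itself \<Rightarrow> bool" where
  "path_complete_cfpo _ \<longleftrightarrow>
     interval_connected (UNIV :: 'a set) \<and>
     (\<forall>s t :: 'a. interval_connected (cfpo_path s t))"

definition up_cone :: "'a::order \<Rightarrow> 'a \<Rightarrow> 'a set" where
  "up_cone x y = {t. x \<notin> cfpo_path t y}"

definition down_cone :: "'a::order \<Rightarrow> 'a \<Rightarrow> 'a set" where
  "down_cone x z = {t. x \<notin> cfpo_path t z}"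

definition up_cones :: "'a::order \<Rightarrow> 'a set set" where
  "up_cones x = {up_cone x y | y. x < y}"

definition down_cones :: "'a::order \<Rightarrow> 'a set set" where
  "down_cones x = {down_cone x z | z. z < x}"

definition automorphism :: "('a::order \<Rightarrow> 'a) \<Rightarrow> bool" where
  "automorphism f \<longleftrightarrow> bij f \<and> (\<forall>x y. x \<le> y \<longleftrightarrow> f x \<le> f y)"

definition one_transitive :: "'a::order itself \<Rightarrow> bool" where
  "one_transitive _ \<longleftrightarrow> (\<forall>x y :: 'a. \<exists>f. automorphism f \<and> f x = y)"

definition cone_transitive :: "'a::order itself \<Rightarrow> bool" where
  "cone_transitive _ \<longleftrightarrow>
     (\<forall>x :: 'a.
        (\<forall>C\<in>up_cones x. \<forall>D\<in>up_cones x. \<exists>f. automorphism f \<and> f ` C = D) \<and>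
        (\<forall>C\<in>down_cones x. \<forall>D\<in>down_cones x. \<exists>f. automorphism f \<and> f ` C = D))"

text \<open>Cardinal comparisons via injections: 5 \<le> ro_up(M) \<le> ro_down(M).\<close>
definition ramification_cond :: "'a::order itself \<Rightarrow> bool" where
  "ramification_cond _ \<longleftrightarrow>
     (\<forall>x :: 'a.
        (\<exists>h :: nat \<Rightarrow> 'a set. inj_on h {..<5} \<and> h ` {..<5} \<subseteq> up_cones x) \<and>
        (\<exists>h. inj_on h (up_cones x) \<and> h ` up_cones x \<subseteq> down_cones x))"

definition K_Cone :: "'a::order itself \<Rightarrow> bool" where
  "K_Cone T \<longleftrightarrow> path_complete_cfpo T \<and> one_transitive T \<and> cone_transitive T
                \<and> ramification_cond T"

definition A5 :: "(nat \<Rightarrow> nat) set" where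
  "A5 = {p. p permutes {..<5} \<and> evenperm p}"

text \<open>A5(f) with respect to the enumeration a_0..a_59 of A5.\<close>
definition A5_formula :: "(nat \<Rightarrow> nat \<Rightarrow> nat) \<Rightarrow> (nat \<Rightarrow> 'b \<Rightarrow> 'b) \<Rightarrow> bool" where
  "A5_formula a f \<longleftrightarrow>
     (\<forall>i<60. \<forall>j<60. \<forall>k<60. (f i \<circ> f j = f k \<longleftrightarrow> a i \<circ> a j = a k))"

end

theory Submission
  imports Defs
begin

text \<open>
  Closure makes the orbit P of any point finite
  and invariant. Let V be the set of turning points of paths between points of P, that is, of
  points that are maximal or minimal on such a path. A path is covered by finitely many segments,
  so V is finite, and V is invariant. If x, y \<in> V are incomparable, the path from x to y turns at
  some u \<noteq> x, y, and in a cycle-free order u is then also a turning point of a path between two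
  points of P; so V contains a point strictly inside the path from x to y. Deleting the points of V
  that lie strictly inside no path between two others (they exist, like the leaves of a finite
  tree) preserves these properties, so this pruning can be iterated until V is a finite invariant
  chain, which every automorphism in question fixes pointwise.
\<close>

section \<open>Interval-connected sets\<close>

lemma rtranclp_iff_successively:
  "R\<^sup>*\<^sup>* a b \<longleftrightarrow> (\<exists>xs. xs \<noteq> [] \<and> hd xs = a \<and> last xs = b \<and> successively R xs)"
proof
  assume "R\<^sup>*\<^sup>* a b"
  then show "\<exists>xs. xs \<noteq> [] \<and> hd xs = a \<and> last xs = b \<and> successively R xs"
  proof (induction rule: converse_rtranclp_induct)
    case base
    show ?case by (intro exI[of _ "[b]"]) simp
  next
    case (step y z)
    then obtain xs where "xs \<noteq> []" "hd xs = z" "last xs = b" "successively R xs" by blast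
    with step.hyps(1) show ?case
      by (intro exI[of _ "y # xs"]) (simp add: successively_Cons)
  qed
next
  assume "\<exists>xs. xs \<noteq> [] \<and> hd xs = a \<and> last xs = b \<and> successively R xs"
  then obtain xs where "xs \<noteq> []" "hd xs = a" "last xs = b" "successively R xs" by blast
  then show "R\<^sup>*\<^sup>* a b"
  proof (induction xs arbitrary: a)
    case (Cons x xs)
    then show ?case
      by (cases "xs = []") (auto simp: successively_Cons intro: converse_rtranclp_into_rtranclp)
  qed simp
qed

lemma comparable_sym: "comparable x y \<longleftrightarrow> comparable y x"
  unfolding comparable_def by auto

lemma comparable_refl [simp]: "comparable x x"
  unfolding comparable_def by simp

lemma seg_sym: "seg x y = seg y x"
  unfolding seg_def by auto

lemma seg_same [simp]: "seg x x = {x}"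
  unfolding seg_def by auto

lemma ends_in_seg: "comparable x y \<Longrightarrow> x \<in> seg x y \<and> y \<in> seg x y"
  unfolding comparable_def seg_def by auto

lemma seg_subset_seg: "z \<in> seg x y \<Longrightarrow> comparable x z \<and> seg x z \<subseteq> seg x y"
  unfolding seg_def comparable_def by (auto intro: order_trans)

definition seg_step :: "'a::order set \<Rightarrow> 'a \<Rightarrow> 'a \<Rightarrow> bool" where
  "seg_step C x y \<longleftrightarrow> comparable x y \<and> seg x y \<subseteq> C"

lemma seg_step_mem: "seg_step C x y \<Longrightarrow> x \<in> C \<and> y \<in> C"
  unfolding seg_step_def using ends_in_seg by blast

lemma symp_seg_step: "symp (seg_step C)"
  unfolding seg_step_def symp_def using comparable_sym seg_sym by metis

lemma seg_step_reach_sym: "(seg_step C)\<^sup>*\<^sup>* x y \<Longrightarrow> (seg_step C)\<^sup>*\<^sup>* y x"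
  using symp_rtranclp[OF symp_seg_step] by (auto dest: sympD)

lemma seg_step_reach_mono: "(seg_step C)\<^sup>*\<^sup>* x y \<Longrightarrow> C \<subseteq> D \<Longrightarrow> (seg_step D)\<^sup>*\<^sup>* x y"
  by (erule rtranclp_mono[THEN predicate2D, rotated]) (force simp: seg_step_def)

lemma seg_step_reach_mem: "(seg_step C)\<^sup>*\<^sup>* x y \<Longrightarrow> x \<in> C \<Longrightarrow> y \<in> C"
  by (induction rule: rtranclp_induct) (auto dest: seg_step_mem)

lemma interval_connected_iff_reach:
  "interval_connected C \<longleftrightarrow> (\<forall>a\<in>C. \<forall>b\<in>C. (seg_step C)\<^sup>*\<^sup>* a b)"
  unfolding interval_connected_def rtranclp_iff_successively successively_conv_nth seg_step_def ..

lemma interval_connected_from: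
  assumes "a \<in> C" and "\<And>b. b \<in> C \<Longrightarrow> (seg_step C)\<^sup>*\<^sup>* a b"
  shows "interval_connected C"
  unfolding interval_connected_iff_reach
  using assms by (meson seg_step_reach_sym rtranclp_trans)

lemma interval_connected_seg:
  assumes "comparable x y"
  shows "interval_connected (seg x y)"
proof (rule interval_connected_from)
  show "x \<in> seg x y" using assms ends_in_seg by blast
next
  fix b assume "b \<in> seg x y"
  then have "seg_step (seg x y) x b" using seg_subset_seg by (auto simp: seg_step_def)
  then show "(seg_step (seg x y))\<^sup>*\<^sup>* x b" ..
qed

lemma interval_connected_Un:
  assumes "interval_connected A" "interval_connected B" "p \<in> A" "p \<in> B"
  shows "interval_connected (A \<union> B)"
proof (rule interval_connected_from)
  show "p \<in> A \<union> B" using \<open>p \<in> A\<close> by simp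
next
  fix b assume "b \<in> A \<union> B"
  then show "(seg_step (A \<union> B))\<^sup>*\<^sup>* p b"
    using assms unfolding interval_connected_iff_reach
    by (meson Un_upper1 Un_upper2 UnE seg_step_reach_mono)
qed

lemma interval_connected_pair:
  assumes "interval_connected {u, v}"
  shows "comparable u v"
proof -
  have "w = u \<or> comparable u v" if "(seg_step {u, v})\<^sup>*\<^sup>* u w" for w
    using that by induction (auto simp: seg_step_def dest: ends_in_seg)
  moreover have "(seg_step {u, v})\<^sup>*\<^sup>* u v"
    using assms by (simp add: interval_connected_iff_reach)
  ultimately show ?thesis by (metis comparable_refl)
qed

lemma seg_step_component_closed:
  assumes "(seg_step C)\<^sup>*\<^sup>* a q" "seg_step C q r" "s \<in> seg q r"
  shows "(seg_step C)\<^sup>*\<^sup>* a s"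
proof -
  have "seg_step C q s" using assms(2,3) seg_subset_seg unfolding seg_step_def by blast
  with assms(1) show ?thesis ..
qed

lemma interval_connected_component: "interval_connected {q. (seg_step C)\<^sup>*\<^sup>* a q}"
proof (rule interval_connected_from)
  fix b assume "b \<in> {q. (seg_step C)\<^sup>*\<^sup>* a q}"
  then have "(seg_step C)\<^sup>*\<^sup>* a b" by simp
  then show "(seg_step {q. (seg_step C)\<^sup>*\<^sup>* a q})\<^sup>*\<^sup>* a b"
  proof induction
    case (step q r)
    then have "seg_step {q. (seg_step C)\<^sup>*\<^sup>* a q} q r"
      using seg_step_component_closed unfolding seg_step_def by blast
    with step.IH show ?case ..
  qed simp
qed simp

lemma interval_connected_cut:
  assumes C: "interval_connected C" and "a \<in> C" "x \<in> C" "a \<noteq> x"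
  obtains A p where "a \<in> A" "A \<subseteq> C - {x}" "interval_connected A"
    "p \<in> A" "comparable p x" "seg p x \<subseteq> insert x A"
proof -
  define A where "A = {q. (seg_step (C - {x}))\<^sup>*\<^sup>* a q}"
  have "a \<in> A" "interval_connected A"
    unfolding A_def by (simp_all add: interval_connected_component)
  have "A \<subseteq> C - {x}"
    unfolding A_def using \<open>a \<in> C\<close> \<open>a \<noteq> x\<close> seg_step_reach_mem by fastforce
  \<comment> \<open>A walk from a inside C leaves A only by a step whose segment contains x.\<close>
  have exit: "q \<in> A \<or> (\<exists>p\<in>A. comparable p x \<and> seg p x \<subseteq> insert x A)"
    if "(seg_step C)\<^sup>*\<^sup>* a q" for q
    using that
  proof induction
    case (step q r)
    show ?case
    proof (cases "q \<in> A \<and> x \<in> seg q r")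
      case True
      have "s \<in> A" if "s \<in> seg q x" "s \<noteq> x" for s
      proof -
        from that True step.hyps(2) have "seg_step (C - {x}) q s"
          unfolding seg_step_def seg_def comparable_def by (auto dest: order_antisym)
        with True show ?thesis unfolding A_def by (auto intro: rtranclp.rtrancl_into_rtrancl)
      qed
      with True show ?thesis using seg_subset_seg by blast
    next
      case False
      with step have "q \<notin> A \<or> seg_step (C - {x}) q r" unfolding seg_step_def by blast
      with step show ?thesis unfolding A_def by (auto intro: rtranclp.rtrancl_into_rtrancl)
    qed
  qed (simp add: \<open>a \<in> A\<close>)
  have "x \<notin> A" using \<open>A \<subseteq> C - {x}\<close> by blast
  with exit C \<open>a \<in> C\<close> \<open>x \<in> C\<close> obtain p where "p \<in> A" "comparable p x" "seg p x \<subseteq> insert x A"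
    unfolding interval_connected_iff_reach by blast
  with that \<open>a \<in> A\<close> \<open>A \<subseteq> C - {x}\<close> \<open>interval_connected A\<close> show thesis by blast
qed

lemma cfpo_path_least: "s \<in> C \<Longrightarrow> t \<in> C \<Longrightarrow> interval_connected C \<Longrightarrow> cfpo_path s t \<subseteq> C"
  unfolding cfpo_path_def by auto

lemma left_in_cfpo_path: "s \<in> cfpo_path s t"
  and right_in_cfpo_path: "t \<in> cfpo_path s t"
  unfolding cfpo_path_def by auto

lemma cfpo_path_sym: "cfpo_path s t = cfpo_path t s"
  unfolding cfpo_path_def by auto

lemma cfpo_path_same [simp]: "cfpo_path a a = {a}"
  using cfpo_path_least[of a "{a}" a] interval_connected_seg[of a a] left_in_cfpo_path[of a a]
  by auto

lemma cfpo_path_subset_seg: "comparable s t \<Longrightarrow> cfpo_path s t \<subseteq> seg s t"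
  by (rule cfpo_path_least) (auto dest: ends_in_seg intro: interval_connected_seg)

lemma reach_finite_seg_cover:
  assumes "(seg_step C)\<^sup>*\<^sup>* a b" "a \<in> C"
  shows "\<exists>X D. finite X \<and> X \<subseteq> C \<and> b \<in> X \<and> interval_connected D \<and> a \<in> D \<and> b \<in> D \<and>
           (\<forall>q\<in>D. \<exists>x\<in>X. \<exists>y\<in>X. comparable x y \<and> q \<in> seg x y)"
  using assms(1)
proof induction
  case base
  show ?case
    using assms(2) interval_connected_seg[of a a]
    by (intro exI[of _ "{a}"]) (auto simp: comparable_def)
next
  case (step b c)
  then obtain X D where XD: "finite X" "X \<subseteq> C" "b \<in> X" "interval_connected D" "a \<in> D" "b \<in> D"
    "\<forall>q\<in>D. \<exists>x\<in>X. \<exists>y\<in>X. comparable x y \<and> q \<in> seg x y" by blast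
  have bc: "comparable b c" "seg b c \<subseteq> C" using step.hyps(2) unfolding seg_step_def by auto
  have "interval_connected (D \<union> seg b c)"
    using ends_in_seg[OF bc(1)]
    by (intro interval_connected_Un[OF XD(4) interval_connected_seg[OF bc(1)] XD(6)]) simp
  with XD bc step.hyps(2) show ?case
    by (intro exI[of _ "insert c X"] exI[of _ "D \<union> seg b c"]) (auto dest: seg_step_mem ends_in_seg)
qed

section \<open>Automorphisms\<close>

lemma automorphism_le_iff: "automorphism f \<Longrightarrow> f x \<le> f y \<longleftrightarrow> x \<le> y"
  unfolding automorphism_def by auto

lemma automorphism_less_iff: "automorphism f \<Longrightarrow> f x < f y \<longleftrightarrow> x < y"
  by (simp add: automorphism_le_iff less_le_not_le)

lemma automorphism_eq_iff: "automorphism f \<Longrightarrow> f x = f y \<longleftrightarrow> x = y"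
  unfolding automorphism_def by (auto dest: bij_is_inj injD)

lemma automorphism_inv: "automorphism f \<Longrightarrow> automorphism (inv f)"
  unfolding automorphism_def by (metis bij_imp_bij_inv bij_inv_eq_iff)

lemma automorphism_image_seg:
  assumes f: "automorphism f"
  shows "f ` seg x y = seg (f x) (f y)"
proof
  show "f ` seg x y \<subseteq> seg (f x) (f y)"
    by (auto simp: seg_def automorphism_le_iff[OF f])
  show "seg (f x) (f y) \<subseteq> f ` seg x y"
  proof
    fix z assume z: "z \<in> seg (f x) (f y)"
    obtain w where "z = f w" using f unfolding automorphism_def by (metis bij_is_surj surjD)
    with z show "z \<in> f ` seg x y" by (auto simp: seg_def automorphism_le_iff[OF f])
  qed
qed

lemma automorphism_image_connected:
  assumes f: "automorphism f" and C: "interval_connected C"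
  shows "interval_connected (f ` C)"
proof -
  have step: "seg_step (f ` C) (f x) (f y)" if "seg_step C x y" for x y
    using that unfolding seg_step_def comparable_def
    by (simp add: automorphism_image_seg[OF f, symmetric] automorphism_le_iff[OF f] image_mono)
  have "(seg_step (f ` C))\<^sup>*\<^sup>* (f a) (f b)" if "(seg_step C)\<^sup>*\<^sup>* a b" for a b
    using that by induction (auto intro: rtranclp.rtrancl_into_rtrancl step)
  with C show ?thesis unfolding interval_connected_iff_reach by blast
qed

lemma automorphism_image_path:
  assumes f: "automorphism f"
  shows "f ` cfpo_path a b = cfpo_path (f a) (f b)"
proof -
  have image_subset: "h ` cfpo_path s t \<subseteq> cfpo_path (h s) (h t)" if h: "automorphism h" for h s t
  proof -
    have "h z \<in> C" if "z \<in> cfpo_path s t" "h s \<in> C" "h t \<in> C" "interval_connected C" for z C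
    proof -
      have "bij h" using h unfolding automorphism_def by simp
      then have "inv h ` C = {y. h y \<in> C}"
        by (auto simp: bij_is_surj surj_f_inv_f image_iff bij_inv_eq_iff)
      moreover have "interval_connected (inv h ` C)"
        using automorphism_image_connected[OF automorphism_inv[OF h] that(4)] .
      ultimately show ?thesis using that(1-3) cfpo_path_least[of s "inv h ` C" t] by auto
    qed
    then show ?thesis unfolding cfpo_path_def by blast
  qed
  have bij: "bij f" using f unfolding automorphism_def by simp
  have "inv f ` cfpo_path (f a) (f b) \<subseteq> cfpo_path a b"
    using image_subset[OF automorphism_inv[OF f], of "f a" "f b"] bij by (simp add: bij_is_inj)
  then have "cfpo_path (f a) (f b) \<subseteq> f ` cfpo_path a b"
    using bij by (metis bij_is_surj image_mono image_f_inv_f)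
  with image_subset[OF f] show ?thesis by blast
qed

lemma automorphism_mem_path:
  "automorphism f \<Longrightarrow> f z \<in> cfpo_path (f a) (f b) \<longleftrightarrow> z \<in> cfpo_path a b"
  by (metis automorphism_image_path automorphism_eq_iff image_iff)

lemma automorphism_fixes_finite_chain:
  assumes "finite V" and chain: "\<forall>a\<in>V. \<forall>b\<in>V. comparable a b"
    and f: "automorphism f" and "f ` V \<subseteq> V" and "v \<in> V"
  shows "f v = v"
proof -
  have no_up: "\<not> w < f w" if "w \<in> V" for w
  proof
    assume "w < f w"
    then have "{w \<in> V. w < f w} \<noteq> {}" using that by blast
    then obtain m where m: "m \<in> V" "m < f m" and max: "\<forall>c\<in>{w \<in> V. w < f w}. m \<le> c \<longrightarrow> m = c"
      using finite_has_maximal[of "{w \<in> V. w < f w}"] \<open>finite V\<close> by auto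
    then have "f m \<in> {w \<in> V. w < f w}"
      using \<open>f ` V \<subseteq> V\<close> automorphism_less_iff[OF f] by auto
    with m max show False by (auto simp: less_le)
  qed
  have no_down: "\<not> f w < w" if "w \<in> V" for w
  proof
    assume "f w < w"
    then have "{w \<in> V. f w < w} \<noteq> {}" using that by blast
    then obtain m where m: "m \<in> V" "f m < m" and min: "\<forall>c\<in>{w \<in> V. f w < w}. c \<le> m \<longrightarrow> m = c"
      using finite_has_minimal[of "{w \<in> V. f w < w}"] \<open>finite V\<close> by auto
    then have "f m \<in> {w \<in> V. f w < w}"
      using \<open>f ` V \<subseteq> V\<close> automorphism_less_iff[OF f] by auto
    with m min show False by (auto simp: less_le)
  qed
  have "comparable v (f v)" using chain \<open>v \<in> V\<close> \<open>f ` V \<subseteq> V\<close> by blast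
  with no_up no_down \<open>v \<in> V\<close> show ?thesis unfolding comparable_def by (auto simp: le_less)
qed

section \<open>Turning points and pruning\<close>

definition extremal :: "'a::order set \<Rightarrow> 'a \<Rightarrow> bool" where
  "extremal Q u \<longleftrightarrow> u \<in> Q \<and> ((\<forall>w\<in>Q. \<not> u < w) \<or> (\<forall>w\<in>Q. \<not> w < u))"

lemma automorphism_extremal:
  assumes f: "automorphism f" and "extremal (cfpo_path a b) u"
  shows "extremal (cfpo_path (f a) (f b)) (f u)"
  using assms(2) unfolding extremal_def automorphism_image_path[OF f, symmetric]
  by (auto simp: automorphism_less_iff[OF f])

lemma seg_cover_bounds:
  assumes "\<forall>q\<in>Q. \<exists>x\<in>X. \<exists>y\<in>X. comparable x y \<and> q \<in> seg x y"
  shows "\<forall>q\<in>Q. \<exists>y\<in>X. q \<le> y" and "\<forall>q\<in>Q. \<exists>y\<in>X. y \<le> q"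
proof -
  have "(\<exists>y\<in>X. q \<le> y) \<and> (\<exists>y\<in>X. y \<le> q)" if "q \<in> Q" for q
  proof -
    obtain x y where "x \<in> X" "y \<in> X" "q \<in> seg x y" using assms \<open>q \<in> Q\<close> by blast
    then show ?thesis unfolding seg_def by auto
  qed
  then show "\<forall>q\<in>Q. \<exists>y\<in>X. q \<le> y" and "\<forall>q\<in>Q. \<exists>y\<in>X. y \<le> q" by simp_all
qed

lemma finite_cover_maximal:
  fixes X :: "'a::order set"
  assumes "finite X" "x \<in> X" and cover: "\<forall>q\<in>Q. \<exists>y\<in>X. q \<le> y"
  shows "\<exists>m\<in>X. x \<le> m \<and> (\<forall>w\<in>Q. \<not> m < w)"
proof -
  obtain m where m: "m \<in> X" "x \<le> m" and max: "\<forall>c\<in>X. m \<le> c \<longrightarrow> m = c"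
    using finite_has_maximal2[OF assms(1,2)] by blast
  have "\<not> m < w" if w: "w \<in> Q" for w
  proof
    assume "m < w"
    moreover obtain y where "y \<in> X" "w \<le> y" using cover w by blast
    ultimately have "m < y" "y \<in> X" by (auto intro: less_le_trans)
    with max show False by (auto simp: less_le)
  qed
  with m show ?thesis by blast
qed

lemma finite_cover_minimal:
  fixes X :: "'a::order set"
  assumes "finite X" "x \<in> X" and cover: "\<forall>q\<in>Q. \<exists>y\<in>X. y \<le> q"
  shows "\<exists>m\<in>X. m \<le> x \<and> (\<forall>w\<in>Q. \<not> w < m)"
proof -
  obtain m where m: "m \<in> X" "m \<le> x" and min: "\<forall>c\<in>X. c \<le> m \<longrightarrow> m = c"
    using finite_has_minimal2[OF assms(1,2)] by blast
  have "\<not> w < m" if w: "w \<in> Q" for w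
  proof
    assume "w < m"
    moreover obtain y where "y \<in> X" "y \<le> w" using cover w by blast
    ultimately have "y < m" "y \<in> X" by (auto intro: le_less_trans)
    with min show False by (auto simp: less_le)
  qed
  with m show ?thesis by blast
qed

definition turning_points :: "'a::order set \<Rightarrow> 'a set" where
  "turning_points P = {u. \<exists>p\<in>P. \<exists>q\<in>P. extremal (cfpo_path p q) u}"

lemma subset_turning_points: "P \<subseteq> turning_points P"
proof
  fix p assume "p \<in> P"
  moreover have "extremal (cfpo_path p p) p" by (simp add: extremal_def)
  ultimately show "p \<in> turning_points P" unfolding turning_points_def by blast
qed

lemma automorphism_turning_points:
  assumes f: "automorphism f" and "f ` P \<subseteq> P"
  shows "f ` turning_points P \<subseteq> turning_points P"
proof
  fix z assume "z \<in> f ` turning_points P"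
  then obtain u p q where "z = f u" "p \<in> P" "q \<in> P" "extremal (cfpo_path p q) u"
    unfolding turning_points_def by blast
  with assms show "z \<in> turning_points P"
    unfolding turning_points_def using automorphism_extremal[OF f] by blast
qed

definition inner_points :: "'a::order set \<Rightarrow> 'a set" where
  "inner_points V = {v \<in> V. \<exists>a\<in>V. \<exists>b\<in>V. a \<noteq> v \<and> b \<noteq> v \<and> v \<in> cfpo_path a b}"

definition splits_incomparables :: "'a::order set \<Rightarrow> bool" where
  "splits_incomparables V \<longleftrightarrow>
     (\<forall>a\<in>V. \<forall>b\<in>V. \<not> comparable a b \<longrightarrow> (\<exists>u\<in>V. u \<in> cfpo_path a b \<and> u \<noteq> a \<and> u \<noteq> b))"

lemma inner_points_subset: "inner_points V \<subseteq> V"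
  unfolding inner_points_def by blast

lemma automorphism_inner_points:
  assumes f: "automorphism f" and "f ` V \<subseteq> V"
  shows "f ` inner_points V \<subseteq> inner_points V"
proof
  fix z assume "z \<in> f ` inner_points V"
  then obtain v a b where "z = f v" "v \<in> V" "a \<in> V" "b \<in> V" "a \<noteq> v" "b \<noteq> v" "v \<in> cfpo_path a b"
    unfolding inner_points_def by blast
  moreover have "f a \<in> V" "f b \<in> V" "f v \<in> V" using \<open>f ` V \<subseteq> V\<close> \<open>a \<in> V\<close> \<open>b \<in> V\<close> \<open>v \<in> V\<close> by blast+
  moreover have "f a \<noteq> f v" "f b \<noteq> f v" "f v \<in> cfpo_path (f a) (f b)"
    using \<open>a \<noteq> v\<close> \<open>b \<noteq> v\<close> \<open>v \<in> cfpo_path a b\<close>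
    by (simp_all add: automorphism_eq_iff[OF f] automorphism_mem_path[OF f])
  ultimately show "z \<in> inner_points V" unfolding inner_points_def by blast
qed

lemma splits_incomparables_inner_points:
  assumes "splits_incomparables V"
  shows "splits_incomparables (inner_points V)"
  unfolding splits_incomparables_def
proof (intro ballI impI)
  fix a b assume ab: "a \<in> inner_points V" "b \<in> inner_points V" "\<not> comparable a b"
  then obtain u where "u \<in> V" "u \<in> cfpo_path a b" "u \<noteq> a" "u \<noteq> b"
    using assms inner_points_subset unfolding splits_incomparables_def by blast
  moreover have "a \<in> V" "b \<in> V" using ab(1,2) inner_points_subset by blast+
  ultimately have "u \<in> inner_points V" unfolding inner_points_def by auto
  with \<open>u \<in> cfpo_path a b\<close> \<open>u \<noteq> a\<close> \<open>u \<noteq> b\<close>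
  show "\<exists>u\<in>inner_points V. u \<in> cfpo_path a b \<and> u \<noteq> a \<and> u \<noteq> b" by blast
qed

lemma splits_incomparables_chain:
  assumes "splits_incomparables V" "inner_points V = {}"
  shows "\<forall>a\<in>V. \<forall>b\<in>V. comparable a b"
proof (intro ballI)
  fix a b assume "a \<in> V" "b \<in> V"
  show "comparable a b"
  proof (rule ccontr)
    assume "\<not> comparable a b"
    then obtain u where "u \<in> V" "u \<in> cfpo_path a b" "u \<noteq> a" "u \<noteq> b"
      using assms(1) \<open>a \<in> V\<close> \<open>b \<in> V\<close> unfolding splits_incomparables_def by blast
    with \<open>a \<in> V\<close> \<open>b \<in> V\<close> have "u \<in> inner_points V" unfolding inner_points_def by auto
    with assms(2) show False by simp
  qed
qed

section \<open>Paths in a path-complete CFPO\<close>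

locale path_complete =
  fixes M :: "'a::order itself"
  assumes interval_connected_path: "\<And>s t :: 'a. interval_connected (cfpo_path s t)"
begin

lemma reach_along_path: "(seg_step (cfpo_path s t))\<^sup>*\<^sup>* s (t::'a)"
  using interval_connected_path[of s t] left_in_cfpo_path right_in_cfpo_path
  unfolding interval_connected_iff_reach by blast

lemma path_subset_Un: "cfpo_path a c \<subseteq> cfpo_path a b \<union> cfpo_path b (c::'a)"
  by (rule cfpo_path_least)
    (auto intro: interval_connected_Un interval_connected_path left_in_cfpo_path right_in_cfpo_path)

lemma path_subset_path:
  "x \<in> cfpo_path a b \<Longrightarrow> y \<in> cfpo_path a b \<Longrightarrow> cfpo_path x y \<subseteq> cfpo_path a (b::'a)"
  by (rule cfpo_path_least) (auto intro: interval_connected_path)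

lemma path_minus_endpoint:
  fixes a x :: 'a
  assumes "a \<noteq> x"
  shows "interval_connected (cfpo_path a x - {x})" and "\<exists>p\<in>cfpo_path a x - {x}. comparable p x"
proof -
  obtain A p where A: "a \<in> A" "A \<subseteq> cfpo_path a x - {x}" "interval_connected A"
    and p: "p \<in> A" "comparable p x" "seg p x \<subseteq> insert x A"
    using interval_connected_cut[OF interval_connected_path left_in_cfpo_path
        right_in_cfpo_path assms] .
  have "insert x A = A \<union> seg p x" using p ends_in_seg by blast
  then have "interval_connected (insert x A)"
    using interval_connected_Un[OF A(3) interval_connected_seg] p ends_in_seg by metis
  then have "cfpo_path a x \<subseteq> insert x A" using A(1) by (intro cfpo_path_least) auto
  with A(2) have "A = cfpo_path a x - {x}" by blast
  with A(3) p show "interval_connected (cfpo_path a x - {x})"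
    and "\<exists>p\<in>cfpo_path a x - {x}. comparable p x" by auto
qed

lemma endpoint_notin_path:
  fixes a x y :: 'a
  assumes "y \<in> cfpo_path a x" "y \<noteq> x"
  shows "x \<notin> cfpo_path a y"
proof -
  have "a \<noteq> x" using assms by auto
  then have "cfpo_path a y \<subseteq> cfpo_path a x - {x}"
    using assms path_minus_endpoint(1) left_in_cfpo_path by (intro cfpo_path_least) auto
  then show ?thesis by blast
qed

lemma path_last_step:
  fixes a x :: 'a
  assumes "a \<noteq> x"
  obtains p where "p \<in> cfpo_path a x" "p \<noteq> x" "comparable p x" "x \<notin> cfpo_path a p"
  using path_minus_endpoint(2)[OF assms] endpoint_notin_path by blast

lemma path_subset_pair_imp_comparable:
  fixes u v :: 'a
  assumes "cfpo_path u v \<subseteq> {u, v}"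
  shows "comparable u v"
proof -
  have "cfpo_path u v = {u, v}" using assms left_in_cfpo_path right_in_cfpo_path by blast
  then show ?thesis using interval_connected_path interval_connected_pair by metis
qed

lemma comparable_in_seg:
  fixes s t u v :: 'a
  assumes "s \<le> t" "u \<in> seg s t" "v \<in> seg s t"
  shows "comparable u v"
proof (rule ccontr)
  assume nc: "\<not> comparable u v"
  have le: "s \<le> u" "u \<le> t" "s \<le> v" "v \<le> t" using assms unfolding seg_def by auto
  have below: "cfpo_path u v \<subseteq> seg u s \<union> seg s v"
    using le by (intro cfpo_path_least interval_connected_Un[of _ _ s] interval_connected_seg)
      (auto simp: comparable_def seg_def)
  have above: "cfpo_path u v \<subseteq> seg u t \<union> seg t v"
    using le by (intro cfpo_path_least interval_connected_Un[of _ _ t] interval_connected_seg)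
      (auto simp: comparable_def seg_def)
  have "cfpo_path u v \<subseteq> {u, v}"
  proof
    fix x assume x: "x \<in> cfpo_path u v"
    have "x \<le> u \<or> x \<le> v" using below x le unfolding seg_def by (auto intro: order_trans)
    moreover have "u \<le> x \<or> v \<le> x" using above x le unfolding seg_def by (auto intro: order_trans)
    ultimately show "x \<in> {u, v}"
      using nc unfolding comparable_def by (auto intro: order_trans order_antisym)
  qed
  with nc show False using path_subset_pair_imp_comparable by blast
qed

lemma path_eq_seg:
  fixes s t :: 'a
  assumes "s \<le> t"
  shows "cfpo_path s t = seg s t"
proof
  show path_seg: "cfpo_path s t \<subseteq> seg s t"
    using assms cfpo_path_subset_seg comparable_def by blast
  show "seg s t \<subseteq> cfpo_path s t"
  proof
    fix m assume m: "m \<in> seg s t"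
    show "m \<in> cfpo_path s t"
    proof (rule ccontr)
      assume m_notin: "m \<notin> cfpo_path s t"
      have "q < m" if "(seg_step (cfpo_path s t))\<^sup>*\<^sup>* s q" for q
        using that
      proof induction
        case base
        show ?case
          using assms m m_notin left_in_cfpo_path[of s t] unfolding seg_def by (force simp: le_less)
      next
        case (step q r)
        then have "comparable m r"
          using comparable_in_seg[OF assms m] path_seg seg_step_mem by blast
        moreover have "\<not> m \<le> r"
        proof
          assume "m \<le> r"
          with step.IH have "m \<in> seg q r" by (simp add: seg_def less_imp_le)
          with step.hyps(2) m_notin show False unfolding seg_step_def by blast
        qed
        ultimately show ?case by (auto simp: comparable_def)
      qed
      then have "t < m" using reach_along_path by blast
      moreover have "m \<le> t" using m assms unfolding seg_def by (auto intro: order_antisym)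
      ultimately show False by (meson leD)
    qed
  qed
qed

lemma between_in_path: "z < u \<Longrightarrow> u < w \<Longrightarrow> u \<in> cfpo_path z (w::'a)"
  using path_eq_seg[of z w] by (auto simp: seg_def less_imp_le)

lemma path_finite_seg_cover:
  "\<exists>X. finite X \<and> X \<subseteq> cfpo_path a (b::'a) \<and>
     (\<forall>q\<in>cfpo_path a b. \<exists>x\<in>X. \<exists>y\<in>X. comparable x y \<and> q \<in> seg x y)"
proof -
  obtain X D where "finite X" "X \<subseteq> cfpo_path a b" "interval_connected D" "a \<in> D" "b \<in> D"
    "\<forall>q\<in>D. \<exists>x\<in>X. \<exists>y\<in>X. comparable x y \<and> q \<in> seg x y"
    using reach_finite_seg_cover[OF reach_along_path[of a b] left_in_cfpo_path] by blast
  moreover have "cfpo_path a b \<subseteq> D" using calculation by (intro cfpo_path_least)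
  ultimately show ?thesis by (intro exI[of _ X]) blast
qed

lemma finite_extremal: "finite {u. extremal (cfpo_path a (b::'a)) u}"
proof -
  obtain X where X: "finite X" "X \<subseteq> cfpo_path a b"
    "\<forall>q\<in>cfpo_path a b. \<exists>x\<in>X. \<exists>y\<in>X. comparable x y \<and> q \<in> seg x y"
    using path_finite_seg_cover[of a b] by blast
  have "u \<in> X" if u: "extremal (cfpo_path a b) u" for u
  proof -
    obtain x y where "x \<in> X" "y \<in> X" "u \<in> seg x y" using X(3) u unfolding extremal_def by blast
    with X(2) u show ?thesis unfolding extremal_def seg_def by (auto simp: le_less)
  qed
  then have "{u. extremal (cfpo_path a b) u} \<subseteq> X" by blast
  then show ?thesis using X(1) by (rule finite_subset)
qed

lemma extremal_interior:
  fixes a b :: 'a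
  assumes nc: "\<not> comparable a b"
  shows "\<exists>u. extremal (cfpo_path a b) u \<and> u \<noteq> a \<and> u \<noteq> b"
proof (rule ccontr)
  assume no_interior: "\<not> ?thesis"
  obtain X where X: "finite X" "X \<subseteq> cfpo_path a b"
    and cover: "\<forall>q\<in>cfpo_path a b. \<exists>x\<in>X. \<exists>y\<in>X. comparable x y \<and> q \<in> seg x y"
    using path_finite_seg_cover[of a b] by blast
  have X_ends: "x \<in> {a, b}" if x: "x \<in> X" for x
  proof -
    obtain m where "m \<in> X" "x \<le> m" "\<forall>w\<in>cfpo_path a b. \<not> m < w"
      using finite_cover_maximal[OF X(1) x seg_cover_bounds(1)[OF cover]] by blast
    moreover obtain n where "n \<in> X" "n \<le> x" "\<forall>w\<in>cfpo_path a b. \<not> w < n"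
      using finite_cover_minimal[OF X(1) x seg_cover_bounds(2)[OF cover]] by blast
    ultimately have "m \<in> {a, b}" "n \<in> {a, b}" "n \<le> m"
      using no_interior X(2) unfolding extremal_def by auto
    with nc \<open>x \<le> m\<close> \<open>n \<le> x\<close> show ?thesis
      unfolding comparable_def by (auto intro: order_antisym order_trans)
  qed
  have "cfpo_path a b \<subseteq> {a, b}"
  proof
    fix q assume "q \<in> cfpo_path a b"
    then obtain x y where "x \<in> X" "y \<in> X" "comparable x y" "q \<in> seg x y" using cover by blast
    moreover from X_ends have "x \<in> {a, b}" "y \<in> {a, b}" using \<open>x \<in> X\<close> \<open>y \<in> X\<close> by blast+
    ultimately show "q \<in> {a, b}" using nc by (auto simp: comparable_sym)
  qed
  with nc show False using path_subset_pair_imp_comparable by blast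
qed

lemma inner_point_splits_path:
  fixes s t u x :: 'a
  assumes "x \<in> cfpo_path s t" "u \<noteq> x"
  shows "u \<notin> cfpo_path x s \<or> u \<notin> cfpo_path x t"
proof (rule ccontr)
  assume "\<not> ?thesis"
  then have "x \<notin> cfpo_path s u" "x \<notin> cfpo_path u t"
    using endpoint_notin_path assms(2) cfpo_path_sym by metis+
  with assms(1) show False using path_subset_Un[of s t u] by blast
qed

lemma extremal_beyond:
  fixes s u w x y :: 'a
  assumes ext: "extremal (cfpo_path x y) u" and "u \<noteq> x" "u \<notin> cfpo_path x s"
    and w: "w \<in> cfpo_path x s"
  shows "\<forall>z\<in>cfpo_path x y. \<not> u < z \<Longrightarrow> \<not> u < w"
    and "\<forall>z\<in>cfpo_path x y. \<not> z < u \<Longrightarrow> \<not> w < u"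
proof -
  have "cfpo_path x u \<subseteq> cfpo_path x y"
    using ext left_in_cfpo_path path_subset_path unfolding extremal_def by blast
  obtain z where z: "z \<in> cfpo_path x y" "z \<noteq> u" "comparable z u" "u \<notin> cfpo_path x z"
    using path_last_step[OF \<open>u \<noteq> x\<close>[symmetric]] \<open>cfpo_path x u \<subseteq> cfpo_path x y\<close> by blast
  \<comment> \<open>u lies neither on [z, x] nor on [x, w], hence not between z and w\<close>
  have "u \<notin> cfpo_path x w"
    using assms(3) path_subset_path[OF left_in_cfpo_path w] by blast
  then have u_notin: "u \<notin> cfpo_path z w"
    using path_subset_Un[of z w x] z(4) cfpo_path_sym by blast
  show "\<not> u < w" if "\<forall>z\<in>cfpo_path x y. \<not> u < z"
  proof
    assume "u < w"
    moreover have "z < u" using z that unfolding comparable_def by (auto simp: le_less)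
    ultimately show False using between_in_path u_notin by blast
  qed
  show "\<not> w < u" if "\<forall>z\<in>cfpo_path x y. \<not> z < u"
  proof
    assume "w < u"
    moreover have "u < z" using z that unfolding comparable_def by (auto simp: le_less)
    ultimately show False using between_in_path u_notin cfpo_path_sym by metis
  qed
qed

lemma extremal_extend:
  fixes s t u x y :: 'a
  assumes ext: "extremal (cfpo_path x y) u" and "u \<noteq> x" "u \<noteq> y"
    and s: "u \<notin> cfpo_path x s" and t: "u \<notin> cfpo_path y t"
  shows "extremal (cfpo_path s t) u"
proof -
  have ext': "extremal (cfpo_path y x) u" using ext cfpo_path_sym by metis
  have u_xy: "u \<in> cfpo_path x y" using ext unfolding extremal_def by simp
  have "u \<in> cfpo_path s t"
  proof (rule ccontr)
    assume "u \<notin> cfpo_path s t"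
    with s have "u \<notin> cfpo_path x t" using path_subset_Un[of x t s] by blast
    with t have "u \<notin> cfpo_path x y" using path_subset_Un[of x y t] cfpo_path_sym[of y t] by blast
    with u_xy show False by blast
  qed
  have parts: "w \<in> cfpo_path x s \<or> w \<in> cfpo_path x y \<or> w \<in> cfpo_path y t"
    if "w \<in> cfpo_path s t" for w
    using that path_subset_Un[of s t x] path_subset_Un[of x t y] cfpo_path_sym[of s x] by blast
  from ext consider (max) "\<forall>w\<in>cfpo_path x y. \<not> u < w" | (min) "\<forall>w\<in>cfpo_path x y. \<not> w < u"
    unfolding extremal_def by blast
  then have "(\<forall>w\<in>cfpo_path s t. \<not> u < w) \<or> (\<forall>w\<in>cfpo_path s t. \<not> w < u)"
  proof cases
    case max
    then have "\<forall>w\<in>cfpo_path y x. \<not> u < w" by (simp add: cfpo_path_sym)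
    with max have "\<not> u < w" if "w \<in> cfpo_path s t" for w
      using parts[OF that] extremal_beyond(1)[OF ext \<open>u \<noteq> x\<close> s]
        extremal_beyond(1)[OF ext' \<open>u \<noteq> y\<close> t] by blast
    then show ?thesis by blast
  next
    case min
    then have "\<forall>w\<in>cfpo_path y x. \<not> w < u" by (simp add: cfpo_path_sym)
    with min have "\<not> w < u" if "w \<in> cfpo_path s t" for w
      using parts[OF that] extremal_beyond(2)[OF ext \<open>u \<noteq> x\<close> s]
        extremal_beyond(2)[OF ext' \<open>u \<noteq> y\<close> t] by blast
    then show ?thesis by blast
  qed
  with \<open>u \<in> cfpo_path s t\<close> show ?thesis unfolding extremal_def by blast
qed

lemma extremal_transfer:
  fixes s1 t1 s2 t2 x y u :: 'a
  assumes x: "x \<in> cfpo_path s1 t1" and y: "y \<in> cfpo_path s2 t2"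
    and ext: "extremal (cfpo_path x y) u" and "u \<noteq> x" "u \<noteq> y"
  shows "\<exists>s\<in>{s1, t1}. \<exists>t\<in>{s2, t2}. extremal (cfpo_path s t) u"
proof -
  obtain s where "s \<in> {s1, t1}" "u \<notin> cfpo_path x s"
    using inner_point_splits_path[OF x \<open>u \<noteq> x\<close>] by blast
  moreover obtain t where "t \<in> {s2, t2}" "u \<notin> cfpo_path y t"
    using inner_point_splits_path[OF y \<open>u \<noteq> y\<close>] by blast
  ultimately show ?thesis using extremal_extend[OF ext \<open>u \<noteq> x\<close> \<open>u \<noteq> y\<close>] by blast
qed

lemma exists_outer_point:
  fixes V :: "'a set"
  assumes "finite V" "a \<in> V" "b \<in> V" "a \<noteq> b"
  shows "\<exists>v\<in>V. v \<notin> inner_points V"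
proof -
  define F where "F = cfpo_path a ` (V - {a})"
  have "finite F" "F \<noteq> {}" using assms unfolding F_def by auto
  then obtain B where "B \<in> F" and max: "\<forall>B'\<in>F. B \<subseteq> B' \<longrightarrow> B = B'"
    using finite_has_maximal by blast
  then obtain v where v: "v \<in> V" "v \<noteq> a" "B = cfpo_path a v" unfolding F_def by blast
  have "v \<notin> cfpo_path c e" if ce: "c \<in> V" "e \<in> V" "c \<noteq> v" "e \<noteq> v" for c e
  proof
    assume "v \<in> cfpo_path c e"
    then obtain c' where c': "c' \<in> V" "c' \<noteq> v" "v \<in> cfpo_path a c'"
      using ce path_subset_Un[of c e a] cfpo_path_sym[of c a] by blast
    then have "c' \<noteq> a" using v by auto
    moreover have "cfpo_path a v \<subseteq> cfpo_path a c'"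
      using path_subset_path[OF left_in_cfpo_path c'(3)] by simp
    ultimately have "cfpo_path a v = cfpo_path a c'" using max c'(1) v(3) unfolding F_def by blast
    then have "c' \<in> cfpo_path a v" by (simp add: right_in_cfpo_path)
    with endpoint_notin_path[OF c'(3) c'(2)[symmetric]] show False by blast
  qed
  with v show ?thesis unfolding inner_points_def by blast
qed

lemma inner_points_psubset:
  fixes V :: "'a set"
  assumes "finite V" "inner_points V \<noteq> {}"
  shows "inner_points V \<subset> V"
proof -
  obtain v a where "v \<in> V" "a \<in> V" "a \<noteq> v"
    using assms(2) unfolding inner_points_def by blast
  then show ?thesis using exists_outer_point[OF assms(1)] inner_points_subset by blast
qed

lemma finite_turning_points:
  fixes P :: "'a set"
  assumes "finite P"
  shows "finite (turning_points P)"
proof -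
  have "turning_points P = (\<Union>p\<in>P. \<Union>q\<in>P. {u. extremal (cfpo_path p q) u})"
    unfolding turning_points_def by blast
  with assms show ?thesis by (simp add: finite_extremal)
qed

lemma splits_incomparables_turning_points:
  fixes P :: "'a set"
  shows "splits_incomparables (turning_points P)"
  unfolding splits_incomparables_def
proof (intro ballI impI)
  fix x y assume "x \<in> turning_points P" "y \<in> turning_points P" and nc: "\<not> comparable x y"
  then obtain s1 t1 s2 t2 where "s1 \<in> P" "t1 \<in> P" "x \<in> cfpo_path s1 t1"
    and "s2 \<in> P" "t2 \<in> P" "y \<in> cfpo_path s2 t2"
    unfolding turning_points_def extremal_def by blast
  moreover obtain u where u: "extremal (cfpo_path x y) u" "u \<noteq> x" "u \<noteq> y"
    using extremal_interior[OF nc] by blast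
  ultimately obtain s t where "s \<in> P" "t \<in> P" "extremal (cfpo_path s t) u"
    using extremal_transfer by blast
  then have "u \<in> turning_points P" unfolding turning_points_def by blast
  with u show "\<exists>u\<in>turning_points P. u \<in> cfpo_path x y \<and> u \<noteq> x \<and> u \<noteq> y"
    unfolding extremal_def by blast
qed

lemma common_fixed_point_of_splitting_set:
  fixes V :: "'a set"
  assumes "finite V" "V \<noteq> {}" "splits_incomparables V" "\<forall>f\<in>G. automorphism f \<and> f ` V \<subseteq> V"
  shows "\<exists>x. \<forall>f\<in>G. f x = x"
  using assms
proof (induction "card V" arbitrary: V rule: less_induct)
  case less
  show ?case
  proof (cases "inner_points V = {}")
    case True
    then have "\<forall>a\<in>V. \<forall>b\<in>V. comparable a b" using splits_incomparables_chain less.prems(3) by blast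
    moreover obtain v where "v \<in> V" using less.prems(2) by blast
    ultimately have "f v = v" if "f \<in> G" for f
      using automorphism_fixes_finite_chain[OF less.prems(1)] less.prems(4) that by blast
    then show ?thesis by blast
  next
    case False
    have "card (inner_points V) < card V"
      using less.prems(1) inner_points_psubset[OF less.prems(1) False] by (rule psubset_card_mono)
    moreover have "finite (inner_points V)"
      using less.prems(1) inner_points_subset by (rule finite_subset[rotated])
    moreover have "\<forall>f\<in>G. automorphism f \<and> f ` inner_points V \<subseteq> inner_points V"
      using less.prems(4) automorphism_inner_points by blast
    ultimately show ?thesis
      using less.hyps False splits_incomparables_inner_points[OF less.prems(3)] by blast
  qed
qed

theorem common_fixed_point_of_finite_invariant_set:
  fixes P :: "'a set"
  assumes "finite P" "P \<noteq> {}" "\<forall>f\<in>G. automorphism f \<and> f ` P \<subseteq> P"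
  shows "\<exists>x. \<forall>f\<in>G. f x = x"
proof (rule common_fixed_point_of_splitting_set)
  show "finite (turning_points P)" using assms(1) by (rule finite_turning_points)
  show "turning_points P \<noteq> {}" using assms(2) subset_turning_points by blast
  show "splits_incomparables (turning_points P)" by (rule splits_incomparables_turning_points)
  show "\<forall>f\<in>G. automorphism f \<and> f ` turning_points P \<subseteq> turning_points P"
    using assms(3) automorphism_turning_points by blast
qed

theorem common_fixed_point_of_finite_semigroup:
  fixes G :: "('a \<Rightarrow> 'a) set"
  assumes "finite G" "\<forall>f\<in>G. automorphism f" "\<forall>f\<in>G. \<forall>h\<in>G. f \<circ> h \<in> G"
  shows "\<exists>x. \<forall>f\<in>G. f x = x"
proof -
  fix x :: 'a
  \<comment> \<open>adding id keeps the orbit of x nonempty when G is empty\<close>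
  have "f ` (\<lambda>h. h x) ` insert id G \<subseteq> (\<lambda>h. h x) ` insert id G" if "f \<in> G" for f
    using assms(3) that by (auto simp: image_iff) (metis comp_apply)
  with assms show ?thesis
    by (intro common_fixed_point_of_finite_invariant_set[of "(\<lambda>h. h x) ` insert id G"]) auto
qed

end

lemma A5_comp_closed:
  assumes "p \<in> A5" "q \<in> A5"
  shows "p \<circ> q \<in> A5"
proof -
  have "permutation p" "permutation q"
    using assms unfolding A5_def permutation_permutes by auto
  with assms show ?thesis unfolding A5_def by (auto simp: evenperm_comp permutes_compose)
qed

lemma A5_formula_comp_closed:
  assumes a: "bij_betw a {..<60} A5" and "A5_formula a g" "i < 60" "j < 60"
  shows "\<exists>k<60. g i \<circ> g j = g k"
proof -
  have "a i \<circ> a j \<in> A5" using assms(3,4) bij_betw_apply[OF a] by (simp add: A5_comp_closed)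
  then obtain k where "k < 60" "a i \<circ> a j = a k"
    using bij_betw_imp_surj_on[OF a] by (metis imageE lessThan_iff)
  with assms(2-4) show ?thesis unfolding A5_formula_def by auto
qed

theorem mainTheorem2:
  fixes a :: "nat \<Rightarrow> nat \<Rightarrow> nat" and g :: "nat \<Rightarrow> 'a::order \<Rightarrow> 'a"
  assumes "K_Cone TYPE('a)"
    and "bij_betw a {..<60} A5"
    and "\<forall>i<60. automorphism (g i)"
    and "A5_formula a g"
  shows "\<exists>x. \<forall>i<60. g i x = x"
proof -
  interpret path_complete "TYPE('a)"
    using assms(1) by unfold_locales (simp add: K_Cone_def path_complete_cfpo_def)
  have "\<forall>f\<in>g ` {..<60}. \<forall>h\<in>g ` {..<60}. f \<circ> h \<in> g ` {..<60}"
    using A5_formula_comp_closed[OF assms(2,4)] by blast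
  then obtain x where "\<forall>f\<in>g ` {..<60}. f x = x"
    using common_fixed_point_of_finite_semigroup[of "g ` {..<60}"] assms(3) by blast
  then show ?thesis by auto
qed

end
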